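(* Let $\Gamma$ be a complete dominance graph on vertex set $\{1,\dots,n\}$ with graph Laplacian $L$. Let $\tilde{\Gamma}$ be obtained from $\Gamma$ either by deleting an edge of $\Gamma$ (of weight $w$) or by adding an edge $(i,j)$ with weight $w\in[0,1]$, where $(i,j)\notin E$, and let $\tilde{L}$ be the graph Laplacian of $\tilde{\Gamma}$. Then $\mathrm{hd}(L,\tilde{L})=w$.
   Context: For a weighted digraph with weights $w_{ij}\ge 0$ ($w_{ij}=0$ iff $(i,j)$ is not an edge), $d^{+}(i)=\sum_j w_{ij}$, $D=\mathrm{diag}(d^{+}(1),\dots,d^{+}(n))$, $A=[w_{ij}]$, and the graph Laplacian is $L=D-A$. A complete dominance graph is an acyclic tournament (for each pair of distinct vertices exactly one of $(i,j),(j,i)$ is an edge) in which every edge has weight $1$. For $n\times n$ complex matrices $M,\tilde{M}$ with eigenvalues $\lambda_1,\dots,\lambda_n$ and $\tilde\lambda_1,\dots,\tilde\lambda_n$, the spectral variation is $\mathrm{sv}(M,\tilde M)=\max_i\min_j|\tilde\lambda_i-\lambda_j|$ and the Hausdorff distance is $\mathrm{hd}(M,\tilde M)=\max\{\mathrm{sv}(M,\tilde M),\mathrm{sv}(\tilde M,M)\}$. *)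

theory Defs
  imports Complex_Main "Jordan_Normal_Form.Char_Poly"
begin

text \<open>Weighted digraphs on vertex set {0..<n} (the paper's {1..n}, shifted),
  given by a weight function w, with w i j = 0 iff (i,j) is not an edge.\<close>

definition out_deg :: "nat \<Rightarrow> (nat \<Rightarrow> nat \<Rightarrow> real) \<Rightarrow> nat \<Rightarrow> real" where
  "out_deg n w i = (\<Sum>j<n. w i j)"

definition laplacian :: "nat \<Rightarrow> (nat \<Rightarrow> nat \<Rightarrow> real) \<Rightarrow> complex mat" where
  "laplacian n w = mat n n (\<lambda>(i,j).
      complex_of_real ((if i = j then out_deg n w i else 0) - w i j))"

definition complete_dominance_graph :: "nat \<Rightarrow> (nat \<times> nat) set \<Rightarrow> bool" where
  "complete_dominance_graph n E \<longleftrightarrow>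
     E \<subseteq> {0..<n} \<times> {0..<n} \<and>
     (\<forall>i<n. \<forall>j<n. i \<noteq> j \<longrightarrow> ((i,j) \<in> E \<longleftrightarrow> (j,i) \<notin> E)) \<and>
     (\<forall>i. (i,i) \<notin> E) \<and>
     acyclic E"

definition edge_weights :: "(nat \<times> nat) set \<Rightarrow> nat \<Rightarrow> nat \<Rightarrow> real" where
  "edge_weights E i j = (if (i,j) \<in> E then 1 else 0)"

definition eigvals :: "complex mat \<Rightarrow> complex set" where
  "eigvals M = {z. eigenvalue M z}"

definition spectral_variation :: "complex mat \<Rightarrow> complex mat \<Rightarrow> real" where
  "spectral_variation M M' =
     Max ((\<lambda>m. Min ((\<lambda>l. cmod (m - l)) ` eigvals M)) ` eigvals M')"

definition hausdorff_dist :: "complex mat \<Rightarrow> complex mat \<Rightarrow> real" where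
  "hausdorff_dist M M' = max (spectral_variation M M') (spectral_variation M' M)"

end

theory Submission
  imports Defs
begin

(* Number the vertices by their score (out-degree). In a transitive tournament the scores are
   exactly 0, ..., n-1 and i dominates j iff score j < score i, so up to this relabelling the
   Laplacian is the lower triangular matrix with diagonal 0, ..., n-1 and -1 below the diagonal.
   Changing the weight of (a,b) by t adds t e_p (e_p - e_q)^T, where p, q are the scores of a, b.
   Deleting an edge (q < p, t = -1) keeps the matrix lower triangular and lowers the diagonal
   entry p to p - 1. Adding an edge against the order (p < q, t = w) is undone by conjugating with
   the lower triangular all-ones matrix, whose columns are eigenvectors of the unperturbed
   Laplacian: the result is upper triangular with diagonal 0, ..., n-1 except that p + 1 becomes
   p + 1 + w. In both cases one eigenvalue of the integer grid {0, ..., n-1} moves by w <= 1 and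
   leaves its old position at distance w from the new spectrum, so the Hausdorff distance is w. *)

section \<open>Spectra of similar and triangular matrices\<close>

lemma eigvals_char_poly:
  assumes "A \<in> carrier_mat n n"
  shows "eigvals A = {z. poly (char_poly A) z = 0}"
  by (auto simp: eigvals_def eigenvalue_root_char_poly[OF assms])

lemma eigvals_similar:
  assumes "similar_mat A B"
  shows "eigvals A = eigvals B"
proof -
  obtain n P Q where "{A, B, P, Q} \<subseteq> carrier_mat n n"
    using similar_matD[OF assms] by blast
  then show ?thesis
    using eigvals_char_poly char_poly_similar[OF assms] by (metis insert_subset)
qed

lemma similar_mat_intertwined:
  fixes A B P Q :: "'a :: field mat"
  assumes carrier: "A \<in> carrier_mat n n" "B \<in> carrier_mat n n" "P \<in> carrier_mat n n" "Q \<in> carrier_mat n n"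
    and inverse: "P * Q = 1\<^sub>m n" and intertwine: "A * P = P * B"
  shows "similar_mat A B"
proof (rule similar_matI[of _ _ P Q n])
  show "Q * P = 1\<^sub>m n"
    using mat_mult_left_right_inverse[OF carrier(3,4) inverse] .
  have "A = A * (P * Q)"
    using carrier by (simp add: inverse)
  also have "\<dots> = P * B * Q"
    using carrier by (simp add: assoc_mult_mat[of A n n P n Q n, symmetric] intertwine)
  finally show "A = P * B * Q" .
qed (use carrier inverse in auto)

lemma similar_mat_permute:
  fixes B :: "'a :: field mat"
  assumes r: "bij_betw r {0..<n} {0..<n}" and B: "B \<in> carrier_mat n n"
  shows "similar_mat (mat n n (\<lambda>(i, j). B $$ (r i, r j))) B"
proof -
  define P :: "'a mat" where "P = mat n n (\<lambda>(i, j). of_bool (r i = j))"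
  have r_less: "r i < n" if "i < n" for i
    using r that by (auto dest: bij_betwE)
  have r_eq: "r i = r j \<longleftrightarrow> i = j" if "i < n" "j < n" for i j
    using r that by (auto simp: bij_betw_def inj_on_def)
  show ?thesis
  proof (rule similar_mat_intertwined[of _ n _ P "transpose_mat P"])
    show "P * transpose_mat P = 1\<^sub>m n"
      by (intro eq_matI) (auto simp: P_def scalar_prod_def r_less r_eq Int_def Collect_conv_if)
    show "mat n n (\<lambda>(i, j). B $$ (r i, r j)) * P = P * B"
    proof (rule eq_matI)
      fix i j assume "i < dim_row (P * B)" "j < dim_col (P * B)"
      then have ij: "i < n" "j < n"
        using B by (auto simp: P_def)
      have "(\<Sum>l = 0..<n. B $$ (r i, r l) * of_bool (r l = j))
          = (\<Sum>k = 0..<n. B $$ (r i, k) * of_bool (k = j))"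
        using sum.reindex_bij_betw[OF r, of "\<lambda>k. B $$ (r i, k) * of_bool (k = j)"] .
      also have "\<dots> = B $$ (r i, j)"
        using ij by (simp add: Int_def Collect_conv_if)
      also have "\<dots> = (\<Sum>l = 0..<n. of_bool (r i = l) * B $$ (l, j))"
        using ij r_less by (simp add: Int_def Collect_conv_if)
      finally show "(mat n n (\<lambda>(i, j). B $$ (r i, r j)) * P) $$ (i, j) = (P * B) $$ (i, j)"
        using ij B r_less by (simp add: P_def scalar_prod_def)
    qed (use B in \<open>auto simp: P_def\<close>)
  qed (use B in \<open>auto simp: P_def\<close>)
qed

lemma eigvals_upper_triangular:
  fixes A :: "complex mat"
  assumes A: "A \<in> carrier_mat n n" and "upper_triangular A"
  shows "eigvals A = (\<lambda>k. A $$ (k, k)) ` {0..<n}"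
  using A by (auto simp: eigvals_char_poly char_poly_upper_triangular[OF assms] poly_prod_list
      prod_list_zero_iff diag_mat_def)

lemma eigvals_transpose:
  assumes "A \<in> carrier_mat n n"
  shows "eigvals (transpose_mat A) = eigvals A"
  using assms by (simp add: eigvals_char_poly[of _ n])

lemma eigvals_lower_triangular:
  fixes A :: "complex mat"
  assumes A: "A \<in> carrier_mat n n"
    and lower: "\<And>k m. k < m \<Longrightarrow> m < n \<Longrightarrow> A $$ (k, m) = 0"
  shows "eigvals A = (\<lambda>k. A $$ (k, k)) ` {0..<n}"
proof -
  have "upper_triangular (transpose_mat A)"
    using A lower by auto
  then show ?thesis
    using eigvals_upper_triangular[of "transpose_mat A" n] eigvals_transpose[OF A] A by auto
qed

section \<open>Hausdorff distance of spectra\<close>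

lemma hausdorff_dist_eqI:
  assumes finite: "finite (eigvals M)" "finite (eigvals M')"
    and nonempty: "eigvals M \<noteq> {}" "eigvals M' \<noteq> {}"
    and close': "\<And>y. y \<in> eigvals M' \<Longrightarrow> \<exists>x\<in>eigvals M. cmod (y - x) \<le> d"
    and close: "\<And>x. x \<in> eigvals M \<Longrightarrow> \<exists>y\<in>eigvals M'. cmod (x - y) \<le> d"
    and far: "x\<^sub>0 \<in> eigvals M" "\<And>y. y \<in> eigvals M' \<Longrightarrow> d \<le> cmod (x\<^sub>0 - y)"
  shows "hausdorff_dist M M' = d"
proof -
  have "spectral_variation M M' \<le> d"
    unfolding spectral_variation_def using finite nonempty close'
    by (auto simp: Min_le_iff)
  moreover have "spectral_variation M' M \<le> d"
    unfolding spectral_variation_def using finite nonempty close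
    by (auto simp: Min_le_iff)
  moreover have "d \<le> spectral_variation M' M"
  proof -
    have "d \<le> Min ((\<lambda>y. cmod (x\<^sub>0 - y)) ` eigvals M')"
      using finite nonempty far by simp
    also have "\<dots> \<le> spectral_variation M' M"
      unfolding spectral_variation_def using finite far by (intro Max_ge) auto
    finally show ?thesis .
  qed
  ultimately show ?thesis
    unfolding hausdorff_dist_def by linarith
qed

lemma hausdorff_dist_shift_one:
  assumes M: "eigvals M = of_nat ` {0..<n}"
    and M': "eigvals M' = (\<lambda>k. of_nat k + of_bool (k = s) * t) ` {0..<n}"
    and "s < n" "cmod t \<le> 1"
  shows "hausdorff_dist M M' = cmod t"
proof (rule hausdorff_dist_eqI)
  show "of_nat s \<in> eigvals M"
    using M \<open>s < n\<close> by simp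
  fix y assume "y \<in> eigvals M'"
  then obtain k where k: "k < n" "y = of_nat k + of_bool (k = s) * t"
    using M' by auto
  show "cmod t \<le> cmod (of_nat s - y)"
  proof (cases "k = s")
    case False
    have "cmod (of_nat s - of_nat k) = \<bar>real s - real k\<bar>"
      by (metis norm_of_real of_real_diff of_real_of_nat_eq)
    moreover have "1 \<le> \<bar>real s - real k\<bar>"
      using False by linarith
    ultimately show ?thesis
      using False k \<open>cmod t \<le> 1\<close> by simp
  qed (simp add: k)
  show "\<exists>x\<in>eigvals M. cmod (y - x) \<le> cmod t"
    using k M by (intro bexI[of _ "of_nat k"]) auto
next
  fix x assume "x \<in> eigvals M"
  then obtain k where k: "k < n" "x = of_nat k"
    using M by auto
  then show "\<exists>y\<in>eigvals M'. cmod (x - y) \<le> cmod t"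
    using M' by (intro bexI[of _ "of_nat k + of_bool (k = s) * t"]) auto
qed (use M M' \<open>s < n\<close> in auto)

section \<open>Tournament Laplacians\<close>

(* Vertex k dominates every vertex m < k. *)
definition tournament_laplacian :: "nat \<Rightarrow> complex mat" where
  "tournament_laplacian n = mat n n (\<lambda>(k, m). of_bool (k = m) * of_nat k - of_bool (m < k))"

(* The change of a Laplacian per unit of weight added to the edge (p, q). *)
definition edge_shift :: "nat \<Rightarrow> nat \<Rightarrow> nat \<Rightarrow> complex mat" where
  "edge_shift n p q = mat n n (\<lambda>(k, m). of_bool (k = p) * (of_bool (m = p) - of_bool (m = q)))"

definition lower_ones :: "nat \<Rightarrow> complex mat" where
  "lower_ones n = mat n n (\<lambda>(k, m). of_bool (m \<le> k))"

lemma tournament_laplacian_carrier [simp]: "tournament_laplacian n \<in> carrier_mat n n"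
  by (simp add: tournament_laplacian_def)

lemma edge_shift_carrier [simp]: "edge_shift n p q \<in> carrier_mat n n"
  by (simp add: edge_shift_def)

lemma lower_ones_carrier [simp]: "lower_ones n \<in> carrier_mat n n"
  by (simp add: lower_ones_def)

lemma laplacian_update_weight:
  assumes "a < n" "b < n"
  shows "laplacian n (w(a := (w a)(b := w a b + t))) = laplacian n w + of_real t \<cdot>\<^sub>m edge_shift n a b"
proof -
  have update: "w(a := (w a)(b := w a b + t)) = (\<lambda>i j. w i j + of_bool (i = a \<and> j = b) * t)"
    by (auto simp: fun_eq_iff)
  have "out_deg n (\<lambda>i j. w i j + of_bool (i = a \<and> j = b) * t) i = out_deg n w i + of_bool (i = a) * t" for i
    using assms by (simp add: out_deg_def sum.distrib Int_def Collect_conv_if)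
  then show ?thesis
    unfolding update by (intro eq_matI) (auto simp: laplacian_def edge_shift_def algebra_simps)
qed

lemma eigvals_tournament_laplacian: "eigvals (tournament_laplacian n) = of_nat ` {0..<n}"
  by (subst eigvals_lower_triangular[of _ n]) (auto simp: tournament_laplacian_def)

lemma eigvals_tournament_laplacian_shift_down:
  assumes "q < p" "p < n"
  shows "eigvals (tournament_laplacian n + t \<cdot>\<^sub>m edge_shift n p q)
    = (\<lambda>k. of_nat k + of_bool (k = p) * t) ` {0..<n}"
proof -
  have "eigvals (tournament_laplacian n + t \<cdot>\<^sub>m edge_shift n p q)
      = (\<lambda>k. (tournament_laplacian n + t \<cdot>\<^sub>m edge_shift n p q) $$ (k, k)) ` {0..<n}"
    using assms by (intro eigvals_lower_triangular) (auto simp: tournament_laplacian_def edge_shift_def)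
  also have "\<dots> = (\<lambda>k. of_nat k + of_bool (k = p) * t) ` {0..<n}"
    using assms by (intro image_cong) (auto simp: tournament_laplacian_def edge_shift_def)
  finally show ?thesis .
qed

lemma tournament_laplacian_mult_lower_ones:
  "tournament_laplacian n * lower_ones n = mat n n (\<lambda>(k, m). of_bool (m \<le> k) * of_nat m)"
proof (rule eq_matI)
  fix k m assume "k < dim_row (mat n n (\<lambda>(k, m). of_bool (m \<le> k) * of_nat m :: complex))"
    "m < dim_col (mat n n (\<lambda>(k, m). of_bool (m \<le> k) * of_nat m :: complex))"
  then have km: "k < n" "m < n" by auto
  have "(\<Sum>l = 0..<n. (of_bool (k = l) * of_nat k - of_bool (l < k)) * of_bool (m \<le> l))
    = (\<Sum>l = 0..<n. (if l = k then of_bool (m \<le> k) * of_nat k else 0) - of_bool (l \<in> {m..<k}) :: complex)"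
    by (intro sum.cong) auto
  also have "\<dots> = of_bool (m \<le> k) * of_nat k - of_nat (card {m..<k})"
  proof -
    have "{0..<n} \<inter> {l. m \<le> l \<and> l < k} = {m..<k}"
      using km by auto
    then show ?thesis
      using km by (simp add: sum_subtractf)
  qed
  finally show "(tournament_laplacian n * lower_ones n) $$ (k, m)
      = mat n n (\<lambda>(k, m). of_bool (m \<le> k) * of_nat m) $$ (k, m)"
    using km by (simp add: tournament_laplacian_def lower_ones_def scalar_prod_def of_nat_diff)
qed (auto simp: tournament_laplacian_def lower_ones_def)

lemma edge_shift_mult_lower_ones:
  assumes "p < n" "q < n"
  shows "edge_shift n p q * lower_ones n
    = mat n n (\<lambda>(k, m). of_bool (k = p) * (of_bool (m \<le> p) - of_bool (m \<le> q)))"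
proof (rule eq_matI)
  fix k m
  assume "k < dim_row (mat n n (\<lambda>(k, m). of_bool (k = p) * (of_bool (m \<le> p) - of_bool (m \<le> q)) :: complex))"
    "m < dim_col (mat n n (\<lambda>(k, m). of_bool (k = p) * (of_bool (m \<le> p) - of_bool (m \<le> q)) :: complex))"
  then have km: "k < n" "m < n" by auto
  have "(\<Sum>l = 0..<n. of_bool (k = p) * (of_bool (l = p) - of_bool (l = q)) * of_bool (m \<le> l))
    = (\<Sum>l = 0..<n. of_bool (k = p) * ((if l = p then of_bool (m \<le> p) else 0)
        - (if l = q then of_bool (m \<le> q) else 0)) :: complex)"
    by (intro sum.cong) auto
  then show "(edge_shift n p q * lower_ones n) $$ (k, m)
      = mat n n (\<lambda>(k, m). of_bool (k = p) * (of_bool (m \<le> p) - of_bool (m \<le> q))) $$ (k, m)"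
    using assms km
    by (simp add: edge_shift_def lower_ones_def scalar_prod_def sum_subtractf sum_distrib_left[symmetric])
qed (auto simp: edge_shift_def lower_ones_def)

lemma lower_ones_mult_bidiagonal:
  "lower_ones n * mat n n (\<lambda>(k, m). of_bool (k = m) - of_bool (k = Suc m)) = 1\<^sub>m n"
proof (rule eq_matI)
  fix k m assume "k < dim_row (1\<^sub>m n :: complex mat)" "m < dim_col (1\<^sub>m n :: complex mat)"
  then have km: "k < n" "m < n" by auto
  have "(\<Sum>l = 0..<n. of_bool (l \<le> k) * (of_bool (l = m) - of_bool (l = Suc m)))
    = (\<Sum>l = 0..<n. (if l = m then of_bool (m \<le> k) else 0)
        - (if l = Suc m then of_bool (Suc m \<le> k) else 0) :: complex)"
    by (intro sum.cong) auto
  also have "\<dots> = of_bool (k = m)"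
    using km by (auto simp: sum_subtractf)
  finally show "(lower_ones n * mat n n (\<lambda>(k, m). of_bool (k = m) - of_bool (k = Suc m))) $$ (k, m)
      = 1\<^sub>m n $$ (k, m)"
    using km by (simp add: lower_ones_def scalar_prod_def)
qed (auto simp: lower_ones_def)

(* The columns of lower_ones are eigenvectors of the tournament Laplacian, and
   lower_ones (e_p - e_(p+1)) = e_p; this turns the perturbation into a matrix supported on the
   rows p and p + 1 and the columns p + 1, ..., q. *)
lemma tournament_laplacian_shift_mult_lower_ones:
  assumes "p < q" "q < n"
  shows "(tournament_laplacian n + t \<cdot>\<^sub>m edge_shift n p q) * lower_ones n
    = lower_ones n * mat n n (\<lambda>(k, m). of_bool (k = m) * of_nat k
        - t * (of_bool (k = p) - of_bool (k = Suc p)) * of_bool (p < m \<and> m \<le> q))"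
    (is "_ = _ * ?M")
proof (rule eq_matI)
  fix k m assume "k < dim_row (lower_ones n * ?M)" "m < dim_col (lower_ones n * ?M)"
  then have km: "k < n" "m < n"
    by (auto simp: lower_ones_def)
  have "((tournament_laplacian n + t \<cdot>\<^sub>m edge_shift n p q) * lower_ones n) $$ (k, m)
      = (tournament_laplacian n * lower_ones n + t \<cdot>\<^sub>m (edge_shift n p q * lower_ones n)) $$ (k, m)"
    by (simp add: add_mult_distrib_mat[of _ n n _ _ n] mult_smult_assoc_mat[of _ n n _ n])
  also have "\<dots> = of_bool (m \<le> k) * of_nat m - t * of_bool (k = p) * of_bool (p < m \<and> m \<le> q)"
    using km assms by (auto simp: tournament_laplacian_mult_lower_ones edge_shift_mult_lower_ones)
  also have "\<dots> = (lower_ones n * ?M) $$ (k, m)"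
  proof -
    have "(\<Sum>l = 0..<n. of_bool (l \<le> k) * (of_bool (l = m) * of_nat l
          - t * (of_bool (l = p) - of_bool (l = Suc p)) * of_bool (p < m \<and> m \<le> q)))
        = (\<Sum>l = 0..<n. (if l = m then of_bool (m \<le> k) * of_nat m else 0)
          - t * of_bool (p < m \<and> m \<le> q)
            * ((if l = p then of_bool (p \<le> k) else 0) - (if l = Suc p then of_bool (Suc p \<le> k) else 0)))"
      by (intro sum.cong) (auto simp: algebra_simps)
    also have "\<dots> = of_bool (m \<le> k) * of_nat m - t * of_bool (k = p) * of_bool (p < m \<and> m \<le> q)"
      using km assms by (auto simp: sum_subtractf sum_distrib_left[symmetric])
    finally show ?thesis
      using km by (simp add: lower_ones_def scalar_prod_def)
  qed
  finally show "((tournament_laplacian n + t \<cdot>\<^sub>m edge_shift n p q) * lower_ones n) $$ (k, m)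
      = (lower_ones n * ?M) $$ (k, m)" .
qed (auto simp: lower_ones_def tournament_laplacian_def edge_shift_def)

lemma eigvals_tournament_laplacian_shift_up:
  assumes "p < q" "q < n"
  shows "eigvals (tournament_laplacian n + t \<cdot>\<^sub>m edge_shift n p q)
    = (\<lambda>k. of_nat k + of_bool (k = Suc p) * t) ` {0..<n}"
proof -
  let ?M = "mat n n (\<lambda>(k, m). of_bool (k = m) * of_nat k
      - t * (of_bool (k = p) - of_bool (k = Suc p)) * of_bool (p < m \<and> m \<le> q))"
  have "similar_mat (tournament_laplacian n + t \<cdot>\<^sub>m edge_shift n p q) ?M"
    by (rule similar_mat_intertwined[OF _ _ _ _ lower_ones_mult_bidiagonal
          tournament_laplacian_shift_mult_lower_ones[OF assms]]) auto
  then have "eigvals (tournament_laplacian n + t \<cdot>\<^sub>m edge_shift n p q) = eigvals ?M"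
    by (rule eigvals_similar)
  also have "\<dots> = (\<lambda>k. ?M $$ (k, k)) ` {0..<n}"
    by (intro eigvals_upper_triangular) auto
  also have "\<dots> = (\<lambda>k. of_nat k + of_bool (k = Suc p) * t) ` {0..<n}"
    using assms by (intro image_cong) auto
  finally show ?thesis .
qed

section \<open>Complete dominance graphs\<close>

definition score :: "(nat \<times> nat) set \<Rightarrow> nat \<Rightarrow> nat" where
  "score E i = card {j. (i, j) \<in> E}"

context
  fixes n :: nat and E :: "(nat \<times> nat) set"
  assumes cdg: "complete_dominance_graph n E"
begin

lemma dominance_edge_less: "(i, j) \<in> E \<Longrightarrow> i < n \<and> j < n"
  using cdg unfolding complete_dominance_graph_def by auto

lemma dominance_irrefl: "(i, i) \<notin> E"
  using cdg unfolding complete_dominance_graph_def by blast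

lemma dominance_tournament:
  "i < n \<Longrightarrow> j < n \<Longrightarrow> i \<noteq> j \<Longrightarrow> (i, j) \<in> E \<longleftrightarrow> (j, i) \<notin> E"
  using cdg unfolding complete_dominance_graph_def by blast

lemma dominance_trans:
  assumes ij: "(i, j) \<in> E" and jk: "(j, k) \<in> E"
  shows "(i, k) \<in> E"
proof -
  have "(i, k) \<in> E\<^sup>+"
    using ij jk by auto
  moreover have "acyclic E"
    using cdg unfolding complete_dominance_graph_def by blast
  ultimately have "i \<noteq> k" and "(k, i) \<notin> E"
    by (auto simp: acyclic_def dest: trancl_into_trancl)
  then show ?thesis
    using dominance_tournament dominance_edge_less[OF ij] dominance_edge_less[OF jk] by blast
qed

lemma score_less_if_edge:
  assumes "(i, j) \<in> E"
  shows "score E j < score E i"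
proof -
  have "{k. (j, k) \<in> E} \<subset> {k. (i, k) \<in> E}"
    using assms dominance_trans dominance_irrefl by blast
  moreover have "finite {k. (i, k) \<in> E}"
    using dominance_edge_less by (auto intro: finite_subset[of _ "{0..<n}"])
  ultimately show ?thesis
    unfolding score_def by (rule psubset_card_mono[rotated])
qed

lemma edge_iff_score_less:
  assumes "i < n" "j < n"
  shows "(i, j) \<in> E \<longleftrightarrow> score E j < score E i"
  using assms dominance_tournament score_less_if_edge by (metis less_asym less_irrefl)

lemma score_less:
  assumes "i < n"
  shows "score E i < n"
proof -
  have "{j. (i, j) \<in> E} \<subseteq> {0..<n} - {i}"
    using dominance_edge_less dominance_irrefl by auto
  then have "score E i \<le> card ({0..<n} - {i})"
    unfolding score_def by (intro card_mono) auto
  then show ?thesis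
    using assms by simp
qed

lemma bij_betw_score: "bij_betw (score E) {0..<n} {0..<n}"
proof -
  have "inj_on (score E) {0..<n}"
    using dominance_tournament score_less_if_edge unfolding inj_on_def
    by (metis atLeastLessThan_iff less_irrefl)
  moreover have "score E ` {0..<n} \<subseteq> {0..<n}"
    using score_less by auto
  ultimately show ?thesis
    by (simp add: bij_betw_def card_image card_subset_eq)
qed

lemma score_eq_iff: "i < n \<Longrightarrow> j < n \<Longrightarrow> score E i = score E j \<longleftrightarrow> i = j"
  using bij_betw_score by (auto simp: bij_betw_def inj_on_def)

lemma out_deg_edge_weights:
  assumes "i < n"
  shows "out_deg n (edge_weights E) i = score E i"
proof -
  have "{..<n} \<inter> {j. (i, j) \<in> E} = {j. (i, j) \<in> E}"
    using dominance_edge_less by auto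
  then show ?thesis
    by (simp add: out_deg_def edge_weights_def score_def sum.If_cases)
qed

lemma laplacian_edge_weights:
  "laplacian n (edge_weights E) = mat n n (\<lambda>(i, j). tournament_laplacian n $$ (score E i, score E j))"
proof (rule eq_matI)
  fix i j assume "i < dim_row (mat n n (\<lambda>(i, j). tournament_laplacian n $$ (score E i, score E j)))"
    "j < dim_col (mat n n (\<lambda>(i, j). tournament_laplacian n $$ (score E i, score E j)))"
  then have ij: "i < n" "j < n" by auto
  then show "laplacian n (edge_weights E) $$ (i, j)
      = mat n n (\<lambda>(i, j). tournament_laplacian n $$ (score E i, score E j)) $$ (i, j)"
    by (simp add: laplacian_def tournament_laplacian_def out_deg_edge_weights edge_weights_def
        edge_iff_score_less score_less score_eq_iff)
qed (auto simp: laplacian_def)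

lemma edge_shift_by_score:
  assumes "a < n" "b < n"
  shows "edge_shift n a b = mat n n (\<lambda>(i, j). edge_shift n (score E a) (score E b) $$ (score E i, score E j))"
  using assms by (intro eq_matI) (auto simp: edge_shift_def score_less score_eq_iff)

lemma eigvals_laplacian_edge_weights: "eigvals (laplacian n (edge_weights E)) = of_nat ` {0..<n}"
proof -
  have "similar_mat (laplacian n (edge_weights E)) (tournament_laplacian n)"
    unfolding laplacian_edge_weights by (intro similar_mat_permute bij_betw_score) simp
  then show ?thesis
    by (simp add: eigvals_similar eigvals_tournament_laplacian)
qed

lemma eigvals_laplacian_update_weight:
  assumes "a < n" "b < n"
  shows "eigvals (laplacian n ((edge_weights E)(a := (edge_weights E a)(b := edge_weights E a b + t))))
    = eigvals (tournament_laplacian n + of_real t \<cdot>\<^sub>m edge_shift n (score E a) (score E b))"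
proof -
  have "laplacian n ((edge_weights E)(a := (edge_weights E a)(b := edge_weights E a b + t)))
      = laplacian n (edge_weights E) + of_real t \<cdot>\<^sub>m edge_shift n a b"
    using assms by (rule laplacian_update_weight)
  also have "\<dots> = mat n n (\<lambda>(i, j).
      (tournament_laplacian n + of_real t \<cdot>\<^sub>m edge_shift n (score E a) (score E b)) $$ (score E i, score E j))"
    unfolding laplacian_edge_weights edge_shift_by_score[OF assms]
    using score_less by (intro eq_matI) (simp_all add: tournament_laplacian_def edge_shift_def)
  also have "similar_mat \<dots> (tournament_laplacian n + of_real t \<cdot>\<^sub>m edge_shift n (score E a) (score E b))"
    by (intro similar_mat_permute bij_betw_score) simp
  finally show ?thesis
    by (rule eigvals_similar)
qed

lemma eigvals_laplacian_delete_edge: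
  assumes "(a, b) \<in> E"
  shows "eigvals (laplacian n ((edge_weights E)(a := (edge_weights E a)(b := 0))))
    = (\<lambda>k. of_nat k - of_bool (k = score E a)) ` {0..<n}"
proof -
  have ab: "a < n" "b < n"
    using assms dominance_edge_less by auto
  have "(edge_weights E)(a := (edge_weights E a)(b := 0))
      = (edge_weights E)(a := (edge_weights E a)(b := edge_weights E a b + -1))"
    using assms by (simp add: edge_weights_def)
  then have "eigvals (laplacian n ((edge_weights E)(a := (edge_weights E a)(b := 0))))
      = eigvals (tournament_laplacian n + of_real (-1) \<cdot>\<^sub>m edge_shift n (score E a) (score E b))"
    by (simp only: eigvals_laplacian_update_weight[OF ab])
  also have "\<dots> = (\<lambda>k. of_nat k + of_bool (k = score E a) * of_real (-1)) ` {0..<n}"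
    using assms ab by (intro eigvals_tournament_laplacian_shift_down score_less_if_edge score_less)
  finally show ?thesis
    by simp
qed

lemma eigvals_laplacian_add_edge:
  assumes "(b, a) \<in> E"
  shows "eigvals (laplacian n ((edge_weights E)(a := (edge_weights E a)(b := c))))
    = (\<lambda>k. of_nat k + of_bool (k = Suc (score E a)) * of_real c) ` {0..<n}"
proof -
  have ab: "a < n" "b < n"
    using assms dominance_edge_less by auto
  have "(a, b) \<notin> E"
    using assms ab dominance_tournament dominance_irrefl by blast
  then have "(edge_weights E)(a := (edge_weights E a)(b := c))
      = (edge_weights E)(a := (edge_weights E a)(b := edge_weights E a b + c))"
    by (simp add: edge_weights_def)
  then show ?thesis
    using assms ab
    by (simp add: eigvals_laplacian_update_weight score_less_if_edge score_less
        eigvals_tournament_laplacian_shift_up)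
qed

end

theorem theorem3p7:
  fixes n :: nat and E :: "(nat \<times> nat) set" and w' :: "nat \<Rightarrow> nat \<Rightarrow> real"
    and a b :: nat and c :: real
  assumes "complete_dominance_graph n E"
    and "((a,b) \<in> E \<and> c = edge_weights E a b \<and> w' = (edge_weights E)(a := (edge_weights E a)(b := 0)))
       \<or> (a < n \<and> b < n \<and> a \<noteq> b \<and> (a,b) \<notin> E \<and> 0 \<le> c \<and> c \<le> 1 \<and>
          w' = (edge_weights E)(a := (edge_weights E a)(b := c)))"
  shows "hausdorff_dist (laplacian n (edge_weights E)) (laplacian n w') = c"
  using assms(2)
proof (elim disjE conjE)
  assume ab: "(a, b) \<in> E" and "c = edge_weights E a b"
    and "w' = (edge_weights E)(a := (edge_weights E a)(b := 0))"
  moreover have "score E a < n"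
    using assms(1) ab by (auto intro: score_less dest: dominance_edge_less)
  ultimately have "hausdorff_dist (laplacian n (edge_weights E)) (laplacian n w') = cmod (-1 :: complex)"
    using assms(1)
    by (intro hausdorff_dist_shift_one[OF eigvals_laplacian_edge_weights, where s = "score E a"])
      (simp_all add: eigvals_laplacian_delete_edge)
  then show ?thesis
    using ab \<open>c = edge_weights E a b\<close> by (simp add: edge_weights_def)
next
  assume "a < n" "b < n" "a \<noteq> b" "(a, b) \<notin> E" "0 \<le> c" "c \<le> 1"
    and "w' = (edge_weights E)(a := (edge_weights E a)(b := c))"
  moreover have "(b, a) \<in> E"
    using assms(1) calculation dominance_tournament by blast
  moreover have "Suc (score E a) < n"
    using assms(1) \<open>b < n\<close> \<open>(b, a) \<in> E\<close> score_less_if_edge score_less by (meson le_less_trans Suc_leI)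
  ultimately have "hausdorff_dist (laplacian n (edge_weights E)) (laplacian n w') = cmod (of_real c)"
    using assms(1)
    by (intro hausdorff_dist_shift_one[OF eigvals_laplacian_edge_weights, where s = "Suc (score E a)"])
      (simp_all add: eigvals_laplacian_add_edge)
  then show ?thesis
    using \<open>0 \<le> c\<close> by simp
qed

end
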